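(* Let $d \ge 1$, $p \ge 1$, and let $\Sigma \in \mathbb{R}^{d\times d}$ be positive definite. Let $\eta$ be a Borel probability distribution on $\mathbb{R}^d$ that is $(p,\Sigma)$-exponentially controlled. Then for every probability distribution $\zeta$ on $\mathbb{R}^d$ that is absolutely continuous with respect to $\eta$, $$W_{p,\Sigma}(\eta,\zeta) \le (3+d)\,\mathcal{K}_p(\eta\mid\zeta), \qquad \text{where } \mathcal{K}_p(\eta\mid\zeta) := \mathrm{KL}(\zeta\,\|\,\eta)^{1/p} + \big\{\mathrm{KL}(\zeta\,\|\,\eta)/2\big\}^{1/(2p)}.$$
   Context: For distributions $\eta,\zeta$ on $\mathbb{R}^d$, $p\ge 1$ and positive-definite $\Sigma$, the $(p,\Sigma)$-Wasserstein distance is $W_{p,\Sigma}(\eta,\zeta) := \inf_{\omega}\left\{\int \|\Sigma^{-1/2}(\theta-\theta')\|_2^p\,\omega(d\theta,d\theta')\right\}^{1/p}$, the infimum over all couplings $\omega$ of $\eta$ and $\zeta$ (Borel probability measures on $\mathbb{R}^d\times\mathbb{R}^d$ with marginals $\eta$ and $\zeta$). A distribution $\eta$ is $(p,\Sigma)$-exponentially controlled if $\inf_{\theta'\in\mathbb{R}^d}\log\int e^{\|\Sigma^{-1/2}(\theta-\theta')\|_2^p}\,\eta(d\theta) \le d/2$. $\mathrm{KL}(\zeta\|\eta) = \int \log(d\zeta/d\eta)\,d\zeta$ is the Kullback–Leibler divergence. *)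

theory Defs
  imports "HOL-Probability.Probability"
begin

definition pos_def_mat :: "real^'n^'n \<Rightarrow> bool" where
  "pos_def_mat S \<longleftrightarrow> transpose S = S \<and> (\<forall>x. x \<noteq> 0 \<longrightarrow> 0 < x \<bullet> (S *v x))"

text \<open>The Mahalanobis norm, i.e. the Euclidean norm of Sigma^(-1/2) v, where
  Sigma^(-1/2) is the symmetric positive definite inverse square root:
  its square equals v' Sigma^(-1) v.\<close>
definition mnorm :: "real^'n^'n \<Rightarrow> real^'n \<Rightarrow> real" where
  "mnorm S v = sqrt (v \<bullet> (matrix_inv S *v v))"

definition couplings :: "(real^'n) measure \<Rightarrow> (real^'n) measure \<Rightarrow> ((real^'n) \<times> (real^'n)) measure set" where
  "couplings \<eta> \<zeta> = {\<omega>. sets \<omega> = sets (borel \<Otimes>\<^sub>M borel) \<and> prob_space \<omega> \<and>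
      distr \<omega> borel fst = \<eta> \<and> distr \<omega> borel snd = \<zeta>}"

definition wasserstein :: "real \<Rightarrow> real^'n^'n \<Rightarrow> (real^'n) measure \<Rightarrow> (real^'n) measure \<Rightarrow> ennreal" where
  "wasserstein p S \<eta> \<zeta> =
     (let c = (INF \<omega>\<in>couplings \<eta> \<zeta>. \<integral>\<^sup>+ z. ennreal (mnorm S (fst z - snd z) powr p) \<partial>\<omega>)
      in if c = \<infinity> then \<infinity> else ennreal (enn2real c powr (1 / p)))"

text \<open>(p,Sigma)-exponential control:  inf_{theta'} log E_eta exp(||..||^p) \<le> d/2,
  written equivalently (log monotone) as inf_{theta'} E_eta exp(..) \<le> exp(d/2).\<close>
definition exp_controlled :: "real \<Rightarrow> real^'n^'n \<Rightarrow> (real^'n) measure \<Rightarrow> bool" where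
  "exp_controlled p S \<eta> \<longleftrightarrow>
     (INF \<theta>'. \<integral>\<^sup>+ \<theta>. ennreal (exp (mnorm S (\<theta> - \<theta>') powr p)) \<partial>\<eta>)
       \<le> ennreal (exp (real CARD('n) / 2))"

text \<open>KL(zeta || eta) = int log (d zeta / d eta) d zeta, in [0,\<infinity>]. The negative part
  of the integrand is always zeta-integrable, so non-integrability means the value \<infinity>.\<close>
definition KL :: "'a measure \<Rightarrow> 'a measure \<Rightarrow> ereal" where
  "KL \<zeta> \<eta> =
     (if integrable \<zeta> (\<lambda>x. ln (enn2real (RN_deriv \<eta> \<zeta> x)))
      then ereal (\<integral>x. ln (enn2real (RN_deriv \<eta> \<zeta> x)) \<partial>\<zeta>) else \<infinity>)"

end

theory Submission
  imports Defs
begin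

text \<open>Let \<open>g = d\<zeta>/d\<eta>\<close> and \<open>\<rho> x = mnorm \<Sigma> (x - \<theta>) powr p\<close> for a centre \<open>\<theta>\<close> with
  \<open>\<integral> exp \<rho> d\<eta> \<le> exp L\<close>, where \<open>L\<close> is slightly larger than \<open>d / 2\<close>. The maximal coupling of
  \<open>\<eta>\<close> and \<open>\<zeta>\<close>, which leaves the common mass \<open>min g 1\<close> in place, has transport cost at most
  \<open>2 powr (p - 1) * \<integral> \<rho> \<bar>g - 1\<bar> d\<eta>\<close>. Pointwise Fenchel-Young inequalities
  \<open>r \<bar>y - 1\<bar> \<le> a (y ln y - y + 1) + b exp r + c y + e\<close>, integrated against \<open>\<eta>\<close>, bound this
  weighted total variation by \<open>(3 + 2 L) (KL + sqrt (KL / 2))\<close>. Letting \<open>L\<close> decrease to \<open>d / 2\<close>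
  and taking \<open>p\<close>-th roots gives the theorem.\<close>

section \<open>The Mahalanobis norm\<close>

lemma pos_def_mat_mult_matrix_inv:
  fixes S :: "real^'n^'n"
  assumes S: "pos_def_mat S"
  shows "S ** matrix_inv S = mat 1"
proof -
  have "inj ((*v) S)"
  proof (rule injI)
    fix x y assume "S *v x = S *v y"
    then have "(x - y) \<bullet> (S *v (x - y)) = 0"
      by (simp add: matrix_vector_mult_diff_distrib)
    then show "x = y"
      using S unfolding pos_def_mat_def by (metis less_irrefl right_minus_eq)
  qed
  then have "invertible S"
    using matrix_left_invertible_injective invertible_left_inverse by blast
  then have "S ** matrix_inv S = mat 1 \<and> matrix_inv S ** S = mat 1"
    unfolding invertible_def matrix_inv_def by (rule someI_ex)
  then show ?thesis
    by simp
qed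

lemma pos_def_mat_inv:
  fixes S :: "real^'n^'n"
  assumes S: "pos_def_mat S"
  shows "pos_def_mat (matrix_inv S)"
  unfolding pos_def_mat_def
proof safe
  let ?A = "matrix_inv S"
  have sym: "transpose S = S"
    using S pos_def_mat_def by blast
  have "transpose ?A ** S = mat 1"
    using pos_def_mat_mult_matrix_inv[OF S] by (metis matrix_transpose_mul sym transpose_mat)
  then have "transpose ?A = transpose ?A ** (S ** ?A)"
    by (simp add: pos_def_mat_mult_matrix_inv[OF S])
  also have "\<dots> = ?A"
    by (simp add: matrix_mul_assoc \<open>transpose ?A ** S = mat 1\<close>)
  finally show "transpose ?A = ?A" .
  fix x :: "real^'n" assume "x \<noteq> 0"
  define w where "w = ?A *v x"
  have x: "x = S *v w"
    unfolding w_def by (simp add: matrix_vector_mul_assoc pos_def_mat_mult_matrix_inv[OF S])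
  then have "w \<noteq> 0"
    using \<open>x \<noteq> 0\<close> by auto
  then have "0 < w \<bullet> (S *v w)"
    using S unfolding pos_def_mat_def by blast
  moreover have "x \<bullet> (?A *v x) = w \<bullet> (S *v w)"
    by (metis inner_commute w_def x)
  ultimately show "0 < x \<bullet> (?A *v x)"
    by simp
qed

lemma pos_def_mat_inner_nonneg: "pos_def_mat A \<Longrightarrow> 0 \<le> x \<bullet> (A *v x)"
  unfolding pos_def_mat_def by (cases "x = 0") (auto intro: less_imp_le)

lemma inner_matrix_vector_sym:
  fixes A :: "real^'n^'n"
  assumes "transpose A = A"
  shows "u \<bullet> (A *v v) = v \<bullet> (A *v u)"
  by (metis assms dot_lmul_matrix inner_commute transpose_matrix_vector)

lemma pos_def_mat_cauchy_schwarz: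
  fixes A :: "real^'n^'n"
  assumes A: "pos_def_mat A"
  shows "(u \<bullet> (A *v v))\<^sup>2 \<le> (u \<bullet> (A *v u)) * (v \<bullet> (A *v v))"
proof -
  define a b c where "a = u \<bullet> (A *v u)" and "b = u \<bullet> (A *v v)" and "c = v \<bullet> (A *v v)"
  have quad: "0 \<le> a * t\<^sup>2 + 2 * b * t + c" for t
  proof -
    have "(t *\<^sub>R u + v) \<bullet> (A *v (t *\<^sub>R u + v)) = a * t\<^sup>2 + 2 * b * t + c"
      using inner_matrix_vector_sym[of A v u] A
      by (simp add: a_def b_def c_def pos_def_mat_def matrix_vector_right_distrib
          matrix_vector_mult_scaleR inner_add_left inner_add_right power2_eq_square algebra_simps)
    then show ?thesis
      using pos_def_mat_inner_nonneg[OF A] by metis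
  qed
  show ?thesis
  proof (cases "a = 0")
    case True
    have "b = 0"
    proof (rule ccontr)
      assume "b \<noteq> 0"
      then show False
        using quad[of "- (c + 1) / (2 * b)"] True by (simp add: field_simps)
    qed
    then show ?thesis
      using True by (simp add: a_def b_def)
  next
    case False
    then have "0 < a"
      using pos_def_mat_inner_nonneg[OF A, of u] a_def by simp
    then show ?thesis
      using quad[of "- b / a"] unfolding a_def[symmetric] b_def[symmetric] c_def[symmetric]
      by (simp add: field_simps power2_eq_square)
  qed
qed

lemma pos_def_mat_sqrt_triangle:
  fixes A :: "real^'n^'n"
  assumes A: "pos_def_mat A"
  shows "sqrt ((u + v) \<bullet> (A *v (u + v))) \<le> sqrt (u \<bullet> (A *v u)) + sqrt (v \<bullet> (A *v v))"
proof -
  define a b c where "a = u \<bullet> (A *v u)" and "b = u \<bullet> (A *v v)" and "c = v \<bullet> (A *v v)"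
  have "0 \<le> a" "0 \<le> c"
    unfolding a_def c_def by (intro pos_def_mat_inner_nonneg[OF A])+
  have "b \<le> sqrt a * sqrt c"
    using pos_def_mat_cauchy_schwarz[OF A, of u v] \<open>0 \<le> a\<close> \<open>0 \<le> c\<close>
    unfolding a_def[symmetric] b_def[symmetric] c_def[symmetric]
    by (metis real_sqrt_abs real_sqrt_le_mono real_sqrt_mult abs_ge_self order_trans)
  moreover have "(u + v) \<bullet> (A *v (u + v)) = a + 2 * b + c"
    using inner_matrix_vector_sym[of A v u] A
    by (simp add: a_def b_def c_def pos_def_mat_def matrix_vector_right_distrib inner_add_left inner_add_right)
  ultimately have "(u + v) \<bullet> (A *v (u + v)) \<le> (sqrt a + sqrt c)\<^sup>2"
    using \<open>0 \<le> a\<close> \<open>0 \<le> c\<close> by (simp add: power2_eq_square algebra_simps)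
  then show ?thesis
    unfolding a_def[symmetric] c_def[symmetric] using \<open>0 \<le> a\<close> \<open>0 \<le> c\<close>
    by (intro real_le_lsqrt) auto
qed

lemma mnorm_nonneg: "pos_def_mat S \<Longrightarrow> 0 \<le> mnorm S v"
  unfolding mnorm_def by (simp add: pos_def_mat_inner_nonneg pos_def_mat_inv)

lemma mnorm_zero [simp]: "mnorm S 0 = 0"
  by (simp add: mnorm_def)

lemma mnorm_minus: "mnorm S (- v) = mnorm S v"
  using matrix_vector_mult_diff_distrib[of "matrix_inv S" 0 v] by (simp add: mnorm_def)

lemma mnorm_triangle: "pos_def_mat S \<Longrightarrow> mnorm S (u + v) \<le> mnorm S u + mnorm S v"
  unfolding mnorm_def by (rule pos_def_mat_sqrt_triangle[OF pos_def_mat_inv])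

lemma mnorm_diff_triangle:
  "pos_def_mat S \<Longrightarrow> mnorm S (x - y) \<le> mnorm S (x - z) + mnorm S (y - z)"
  using mnorm_triangle[of S "x - z" "z - y"] mnorm_minus[of S "y - z"] by simp

lemma continuous_on_mnorm: "continuous_on UNIV (mnorm S)"
  unfolding mnorm_def
  by (intro continuous_on_real_sqrt continuous_on_inner continuous_on_id
      matrix_vector_mult_linear_continuous_on)

lemma borel_measurable_mnorm [measurable]: "mnorm S \<in> borel_measurable borel"
  by (rule borel_measurable_continuous_onI[OF continuous_on_mnorm])

section \<open>Elementary inequalities\<close>

lemma mult_le_entropy_plus_exp:
  fixes x y :: real
  assumes "0 \<le> y"
  shows "y * x \<le> y * ln y - y + exp x"
proof (cases "y = 0")
  case False
  then have "0 < y"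
    using assms by simp
  have "y * (1 + (x - ln y)) \<le> y * exp (x - ln y)"
    using \<open>0 < y\<close> exp_ge_add_one_self by (intro mult_left_mono) auto
  also have "\<dots> = exp x"
    using \<open>0 < y\<close> by (simp add: exp_diff)
  finally show ?thesis
    by (simp add: algebra_simps)
qed simp

lemma abs_diff_one_le_entropy_exp:
  fixes r y L :: real
  assumes "0 \<le> r" "0 \<le> y"
  shows "r * \<bar>y - 1\<bar> \<le> (y * ln y - y + 1) + 2 * exp (- L) * exp r + L * y + L - 2"
proof -
  have "y * (r - L) \<le> y * ln y - y + exp (r - L)"
    by (rule mult_le_entropy_plus_exp[OF assms(2)])
  moreover have "1 + (r - L) \<le> exp (r - L)"
    by (rule exp_ge_add_one_self)
  moreover have "exp (r - L) = exp (- L) * exp r"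
    by (simp add: exp_diff exp_minus field_simps)
  moreover have "r * \<bar>y - 1\<bar> \<le> r * y + r"
    using assms by (cases "1 \<le> y") (auto simp: algebra_simps)
  ultimately show ?thesis
    by (simp add: algebra_simps)
qed

lemma scaled_abs_diff_one_le_entropy_exp:
  fixes s y :: real
  assumes "0 \<le> s" "0 \<le> y"
  shows "s * \<bar>y - 1\<bar> \<le> (y * ln y - y + 1) + (exp s - 1 - s)"
proof (cases "1 \<le> y")
  case True
  then show ?thesis
    using mult_le_entropy_plus_exp[OF assms(2), of s] by (simp add: algebra_simps)
next
  case False
  have "s \<le> (exp s - exp (- s)) / 2"
    using real_le_x_sinh[OF assms(1)] by (simp add: exp_minus)
  then show ?thesis
    using False mult_le_entropy_plus_exp[OF assms(2), of "- s"] by (simp add: algebra_simps)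
qed

lemma convex_on_linear_plus_ln_minus_powr:
  fixes B c t :: real
  assumes t0: "0 < t" and c_ge: "1 \<le> (1 - t) * c"
  shows "convex_on {1..} (\<lambda>y. B * y + t * ln y - c * y powr t)"
proof -
  define \<phi>' where "\<phi>' y = B + t * inverse y - (c * t) * y powr (t - 1)" for y :: real
  define \<phi>'' where "\<phi>'' y = - t / y\<^sup>2 - c * t * (t - 1) * y powr (t - 2)" for y :: real
  have d1: "((\<lambda>y. B * y + t * ln y - c * y powr t) has_real_derivative \<phi>' y) (at y)"
    if "y \<in> {1..}" for y
    using that unfolding \<phi>'_def by (auto intro!: derivative_eq_intros simp: powr_diff divide_inverse)
  have d2: "(\<phi>' has_real_derivative \<phi>'' y) (at y)" if "y \<in> {1..}" for y
  proof -
    have "0 < y"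
      using that by simp
    have "(\<phi>' has_real_derivative
        0 + t * (- (inverse y ^ Suc (Suc 0))) - (c * t) * ((t - 1) * y powr (t - 1 - 1))) (at y)"
      unfolding \<phi>'_def using \<open>0 < y\<close>
      by (intro DERIV_diff DERIV_add DERIV_const DERIV_cmult DERIV_inverse
          has_real_derivative_powr) auto
    then show ?thesis
      unfolding \<phi>''_def by (simp add: algebra_simps power2_eq_square divide_inverse)
  qed
  have d3: "0 \<le> \<phi>'' y" if "y \<in> {1..}" for y
  proof -
    have y1: "1 \<le> y"
      using that by simp
    have "1 \<le> y powr t"
      using y1 t0 by (simp add: ge_one_powr_ge_zero)
    then have "1 \<le> (1 - t) * c * y powr t"
      using c_ge by (metis mult_mono mult_1_right zero_le_one order_trans)
    then have "t / y\<^sup>2 \<le> t * ((1 - t) * c * y powr t) / y\<^sup>2"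
      using t0 by (intro divide_right_mono) auto
    moreover have "y powr (t - 2) = y powr t / y\<^sup>2"
      using y1 by (simp add: powr_diff)
    then have "c * t * (t - 1) * y powr (t - 2) = - (t * ((1 - t) * c * y powr t) / y\<^sup>2)"
      using y1 by (simp add: field_simps)
    ultimately show ?thesis
      unfolding \<phi>''_def by linarith
  qed
  show ?thesis
    by (rule f''_ge0_imp_convex[OF _ d1 d2 d3]) (auto simp: convex_real_interval)
qed

text \<open>With \<open>y = exp r\<close> the claim says that \<open>\<phi> y = B y + t ln y - c y powr t\<close> is minimal at
  \<open>y = exp L\<close>, which holds as \<open>\<phi>\<close> is convex and stationary there.\<close>
lemma exp_excess_le_tangent:
  fixes t L r :: real
  assumes t0: "0 < t" and t1: "t \<le> 1/3" and L0: "0 < L" and r0: "0 \<le> r"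
  shows "exp (t * r) - 1 - t * r \<le> (exp (t * (L + 3/2)) - 1 - t * (L + 3/2))
           + t * (exp (t * (L + 3/2)) - 1) * exp (- L) * (exp r - exp L)"
proof -
  define k :: real where "k = 3/2"
  define c where "c = exp (t * k)"
  define B where "B = t * (exp (t * (L + k)) - 1) * exp (- L)"
  define \<phi> where "\<phi> y = B * y + t * ln y - c * y powr t" for y :: real
  have "1 \<le> (1 - t) * (1 + t * k)"
    using t0 t1 unfolding k_def by (simp add: algebra_simps)
  also have "\<dots> \<le> (1 - t) * c"
    unfolding c_def using t1 exp_ge_add_one_self by (intro mult_left_mono) auto
  finally have "convex_on {1..} \<phi>"
    unfolding \<phi>_def using t0 by (intro convex_on_linear_plus_ln_minus_powr)
  moreover have "(\<phi> has_real_derivative 0) (at (exp L))"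
  proof -
    have "c * exp L powr (t - 1) = exp (t * (L + k)) * exp (- L)"
      unfolding c_def by (simp add: powr_def exp_add[symmetric] algebra_simps)
    then show ?thesis
      unfolding \<phi>_def B_def using L0
      by (auto intro!: derivative_eq_intros simp: powr_diff divide_inverse exp_minus algebra_simps)
  qed
  ultimately have "0 * (exp r - exp L) \<le> \<phi> (exp r) - \<phi> (exp L)"
    using L0 r0 by (intro convex_on_imp_above_tangent[where A = "{1..}"])
      (auto intro: has_field_derivative_at_within simp: connected_Ici)
  then have "\<phi> (exp L) \<le> \<phi> (exp r)"
    by simp
  moreover have "c * exp y powr t = exp (t * (y + k))" for y
    unfolding c_def by (simp add: powr_def exp_add[symmetric] algebra_simps)
  ultimately have "exp (t * (r + k)) - 1 - t * (r + k) \<le> (exp (t * (L + k)) - 1 - t * (L + k)) + B * (exp r - exp L)"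
    unfolding \<phi>_def by (simp add: algebra_simps)
  moreover have "exp (t * r) - 1 - t * r \<le> exp (t * (r + k)) - 1 - t * (r + k)"
  proof -
    have "exp (t * r) * (t * k) \<le> exp (t * r) * (exp (t * k) - 1)"
      using exp_ge_add_one_self[of "t * k"] by (intro mult_left_mono) (linarith, simp)
    moreover have "t * k \<le> exp (t * r) * (t * k)"
      using t0 r0 unfolding k_def by simp
    ultimately show ?thesis
      by (simp add: exp_add algebra_simps)
  qed
  ultimately show ?thesis
    unfolding B_def k_def by simp
qed

lemma exp_le_cubic:
  fixes x :: real
  assumes "0 \<le> x" "x \<le> 1"
  shows "exp x \<le> 1 + x + x\<^sup>2 / 2 + x ^ 3 / 2"
proof -
  obtain s where s: "\<bar>s\<bar> \<le> \<bar>x\<bar>" "exp x = (\<Sum>m<3. x ^ m / fact m) + exp s / fact 3 * x ^ 3"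
    using Maclaurin_exp_le[of x 3] by blast
  have "exp s \<le> exp 1"
    using s(1) assms by simp
  also have "\<dots> \<le> 3"
    by (rule exp_le)
  finally have "exp s \<le> 3" .
  then have "exp s / 6 * x ^ 3 \<le> 3 / 6 * x ^ 3"
    using assms by (intro mult_right_mono) auto
  then show ?thesis
    using s(2) by (simp add: eval_nat_numeral fact_numeral)
qed

lemma tangent_parameter_bounds:
  fixes L H :: real
  assumes L0: "0 < L" and H0: "0 < H"
    and small: "(2 + 2 * L) * H + (3 + 2 * L) * sqrt (H / 2) < 2 * L"
  defines "t \<equiv> sqrt (2 * H) / (L + 3/2)"
  shows "0 < t" and "t \<le> 1/3"
    and "(H + (exp (t * (L + 3/2)) - 1 - t * (L + 3/2))) / t \<le> (3 + 2 * L) * (H + sqrt (H / 2))"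
proof -
  define \<tau> where "\<tau> = sqrt (2 * H)"
  have \<tau>0: "0 < \<tau>"
    unfolding \<tau>_def using H0 by simp
  have H_eq: "H = \<tau>\<^sup>2 / 2"
    unfolding \<tau>_def using H0 by simp
  have "H / 2 = (\<tau> / 2)\<^sup>2"
    using H_eq by (simp add: power2_eq_square)
  then have sqrt_eq: "sqrt (H / 2) = \<tau> / 2"
    using \<tau>0 by simp
  have small': "(1 + L) * \<tau>\<^sup>2 + (3/2 + L) * \<tau> < 2 * L"
    using small unfolding sqrt_eq unfolding H_eq by (simp add: field_simps)
  have \<tau>1: "\<tau> < 1"
  proof (rule ccontr)
    assume "\<not> \<tau> < 1"
    then have "(1 + L) * 1 \<le> (1 + L) * \<tau>\<^sup>2" and "(3/2 + L) * 1 \<le> (3/2 + L) * \<tau>"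
      using L0 by (intro mult_left_mono; simp add: one_le_power)+
    then show False
      using small' by simp
  qed
  have Lp: "0 < L + 3/2"
    using L0 by simp
  show "0 < t"
    unfolding t_def \<tau>_def[symmetric] using \<tau>0 Lp by simp
  have "(3/2 + L) * \<tau> < 2 * L"
    using small' L0 by (smt (verit) mult_nonneg_nonneg zero_le_power2)
  then have "\<tau> < 2 * L / (L + 3/2)"
    using Lp by (simp add: field_simps)
  then have "t < 2 * L / (L + 3/2) / (L + 3/2)"
    unfolding t_def \<tau>_def[symmetric] using Lp by (rule divide_strict_right_mono)
  also have "\<dots> \<le> 1/3"
  proof -
    have "6 * L \<le> (L + 3/2)\<^sup>2"
      using zero_le_power2[of "L - 3/2"] by (simp add: power2_eq_square algebra_simps)
    moreover have "0 < (L + 3/2) * (L + 3/2)"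
      using Lp by simp
    ultimately show ?thesis
      by (simp add: divide_le_eq power2_eq_square)
  qed
  finally show "t \<le> 1/3"
    by simp
  have t\<tau>: "t * (L + 3/2) = \<tau>"
    unfolding t_def \<tau>_def[symmetric] using Lp by simp
  have "(H + (exp (t * (L + 3/2)) - 1 - t * (L + 3/2))) / t = (H + (exp \<tau> - 1 - \<tau>)) * (L + 3/2) / \<tau>"
    unfolding t\<tau> unfolding t_def \<tau>_def[symmetric] using Lp \<tau>0 by (simp add: field_simps)
  also have "\<dots> \<le> (\<tau>\<^sup>2 / 2 + \<tau>\<^sup>2 / 2 + \<tau> ^ 3 / 2) * (L + 3/2) / \<tau>"
    using exp_le_cubic[of \<tau>] \<tau>0 \<tau>1 H_eq Lp by (intro divide_right_mono mult_right_mono) auto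
  also have "\<dots> = (L + 3/2) * (\<tau> + \<tau>\<^sup>2 / 2)"
    using \<tau>0 by (simp add: field_simps power2_eq_square power3_eq_cube)
  also have "\<dots> \<le> (L + 3/2) * (\<tau> + \<tau>\<^sup>2)"
    using Lp by (intro mult_left_mono) auto
  also have "\<dots> = (3 + 2 * L) * (\<tau>\<^sup>2 / 2 + \<tau> / 2)"
    by (simp add: field_simps)
  also have "\<dots> = (3 + 2 * L) * (H + sqrt (H / 2))"
    by (subst sqrt_eq, subst H_eq, rule refl)
  finally show "(H + (exp (t * (L + 3/2)) - 1 - t * (L + 3/2))) / t \<le> (3 + 2 * L) * (H + sqrt (H / 2))" .
qed

text \<open>For large \<open>H\<close> the Fenchel-Young inequality with the shift \<open>L\<close> suffices; for small \<open>H\<close>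
  one first scales \<open>r\<close> by \<open>t = sqrt (2 H) / (L + 3/2)\<close> and linearises \<open>exp (t r)\<close> in \<open>exp r\<close>
  by the tangent bound.\<close>
lemma entropy_exp_dual_bound:
  fixes L H :: real
  assumes L0: "0 < L" and H0: "0 < H"
  obtains a b c e :: real
  where "0 \<le> a" and "0 \<le> b"
    and "\<And>r y. 0 \<le> r \<Longrightarrow> 0 \<le> y \<Longrightarrow>
           r * \<bar>y - 1\<bar> \<le> a * (y * ln y - y + 1) + b * exp r + c * y + e"
    and "a * H + b * exp L + c + e \<le> (3 + 2 * L) * (H + sqrt (H / 2))"
proof (cases "2 * L \<le> (2 + 2 * L) * H + (3 + 2 * L) * sqrt (H / 2)")
  case True
  show ?thesis
  proof (rule that[of 1 "2 * exp (- L)" L "L - 2"])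
    show "r * \<bar>y - 1\<bar> \<le> 1 * (y * ln y - y + 1) + 2 * exp (- L) * exp r + L * y + (L - 2)"
      if "0 \<le> r" "0 \<le> y" for r y
      using abs_diff_one_le_entropy_exp[OF that, of L] by simp
    show "1 * H + 2 * exp (- L) * exp L + L + (L - 2) \<le> (3 + 2 * L) * (H + sqrt (H / 2))"
      using True exp_minus_inverse[of L] by (simp add: algebra_simps)
  qed simp_all
next
  case False
  define t where "t = sqrt (2 * H) / (L + 3/2)"
  have t0: "0 < t" and t1: "t \<le> 1/3"
    and final: "(H + (exp (t * (L + 3/2)) - 1 - t * (L + 3/2))) / t \<le> (3 + 2 * L) * (H + sqrt (H / 2))"
    using tangent_parameter_bounds[OF L0 H0] False unfolding t_def[symmetric] by auto
  define A where "A = exp (t * (L + 3/2)) - 1 - t * (L + 3/2)"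
  define B where "B = t * (exp (t * (L + 3/2)) - 1) * exp (- L)"
  show ?thesis
  proof (rule that[of "1 / t" "B / t" 0 "(A - B * exp L) / t"])
    show "0 \<le> B / t"
      unfolding B_def using t0 L0 by simp
    show "r * \<bar>y - 1\<bar> \<le> 1 / t * (y * ln y - y + 1) + B / t * exp r + 0 * y + (A - B * exp L) / t"
      if "0 \<le> r" "0 \<le> y" for r y
    proof -
      have "t * (r * \<bar>y - 1\<bar>) \<le> (y * ln y - y + 1) + A + B * (exp r - exp L)"
        using scaled_abs_diff_one_le_entropy_exp[of "t * r" y] exp_excess_le_tangent[OF t0 t1 L0 \<open>0 \<le> r\<close>]
          t0 that unfolding A_def B_def by (simp add: mult.assoc)
      moreover have "1 / t * (y * ln y - y + 1) + B / t * exp r + 0 * y + (A - B * exp L) / t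
          = ((y * ln y - y + 1) + A + B * (exp r - exp L)) / t"
        using t0 by (simp add: field_simps)
      ultimately show ?thesis
        using t0 by (simp add: pos_le_divide_eq mult.commute)
    qed
    show "1 / t * H + B / t * exp L + 0 + (A - B * exp L) / t \<le> (3 + 2 * L) * (H + sqrt (H / 2))"
    proof -
      have "1 / t * H + B / t * exp L + 0 + (A - B * exp L) / t = (H + A) / t"
        using t0 by (simp add: field_simps)
      then show ?thesis
        using final[folded A_def] by simp
    qed
  qed (use t0 in simp)
qed

section \<open>Relative entropy bounds the weighted total variation\<close>

locale abs_continuous_probs = M: prob_space M + N: prob_space N
  for M N :: "'a measure" +
  assumes sets_N: "sets N = sets M"
    and abs_cont: "absolutely_continuous M N"
begin

definition dens :: "'a \<Rightarrow> real" where
  "dens x = enn2real (RN_deriv M N x)"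

lemma borel_measurable_dens [measurable]: "dens \<in> borel_measurable M"
  unfolding dens_def by measurable

lemma dens_nonneg: "0 \<le> dens x"
  unfolding dens_def by simp

lemma density_dens: "density M (\<lambda>x. ennreal (dens x)) = N"
proof -
  have "AE x in M. RN_deriv M N x \<noteq> \<infinity>"
    using M.RN_deriv_finite[OF N.sigma_finite_measure_axioms abs_cont sets_N] .
  then have "density M (\<lambda>x. ennreal (dens x)) = density M (RN_deriv M N)"
    by (intro density_cong) (auto simp: dens_def ennreal_enn2real_if)
  also have "\<dots> = N"
    by (rule M.density_RN_deriv[OF abs_cont sets_N])
  finally show ?thesis .
qed

lemma nn_integral_dens: "(\<integral>\<^sup>+ x. ennreal (dens x) \<partial>M) = 1"
proof -
  have "(\<integral>\<^sup>+ x. ennreal (dens x) \<partial>M) = emeasure (density M (\<lambda>x. ennreal (dens x))) (space M)"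
    by (subst emeasure_density) (auto intro!: nn_integral_cong)
  also have "\<dots> = 1"
    using N.emeasure_space_1 sets_eq_imp_space_eq[OF sets_N] by (simp add: density_dens)
  finally show ?thesis .
qed

lemma integrable_dens: "integrable M dens"
  by (rule integrableI_nonneg) (auto simp: dens_nonneg nn_integral_dens)

lemma integral_dens: "(\<integral>x. dens x \<partial>M) = 1"
  by (subst integral_eq_nn_integral) (auto simp: dens_nonneg nn_integral_dens)

lemma KL_eq:
  "KL N M = (if integrable N (\<lambda>x. ln (dens x)) then ereal (\<integral>x. ln (dens x) \<partial>N) else \<infinity>)"
  by (simp add: KL_def dens_def)

lemma entropy_nonneg: "0 \<le> dens x * ln (dens x) - dens x + 1"
  using mult_le_entropy_plus_exp[of "dens x" 0] dens_nonneg by simp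

lemma
  assumes "integrable N (\<lambda>x. ln (dens x))"
  shows integrable_entropy: "integrable M (\<lambda>x. dens x * ln (dens x) - dens x + 1)"
    and integral_entropy: "(\<integral>x. dens x * ln (dens x) - dens x + 1 \<partial>M) = (\<integral>x. ln (dens x) \<partial>N)"
proof -
  have "integrable (density M (\<lambda>x. ennreal (dens x))) (\<lambda>x. ln (dens x))"
    using assms density_dens by simp
  then have int: "integrable M (\<lambda>x. dens x * ln (dens x))"
    using integrable_density[of "\<lambda>x. ln (dens x)" M dens] dens_nonneg by simp
  then show "integrable M (\<lambda>x. dens x * ln (dens x) - dens x + 1)"
    using integrable_dens by auto
  have "(\<integral>x. ln (dens x) \<partial>N) = (\<integral>x. dens x * ln (dens x) \<partial>M)"
    using integral_density[of "\<lambda>x. ln (dens x)" M dens] dens_nonneg density_dens by simp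
  then show "(\<integral>x. dens x * ln (dens x) - dens x + 1 \<partial>M) = (\<integral>x. ln (dens x) \<partial>N)"
    using int integrable_dens integral_dens by (simp add: M.prob_space)
qed

lemma integral_ln_dens_nonneg:
  assumes "integrable N (\<lambda>x. ln (dens x))"
  shows "0 \<le> (\<integral>x. ln (dens x) \<partial>N)"
proof -
  have "0 \<le> (\<integral>x. dens x * ln (dens x) - dens x + 1 \<partial>M)"
    by (rule integral_nonneg_AE) (simp add: entropy_nonneg)
  then show ?thesis
    by (simp add: integral_entropy[OF assms])
qed

lemma nn_integral_weighted_abs_le_linear_bound:
  fixes \<rho> :: "'a \<Rightarrow> real"
  assumes [measurable]: "\<rho> \<in> borel_measurable M" and \<rho>_nonneg: "\<And>x. 0 \<le> \<rho> x"
    and exp_moment: "(\<integral>\<^sup>+ x. ennreal (exp (\<rho> x)) \<partial>M) \<le> ennreal (exp L)"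
    and KL: "integrable N (\<lambda>x. ln (dens x))"
    and "0 \<le> b"
    and pointwise: "\<And>r y. 0 \<le> r \<Longrightarrow> 0 \<le> y \<Longrightarrow>
           r * \<bar>y - 1\<bar> \<le> a * (y * ln y - y + 1) + b * exp r + c * y + e"
  shows "(\<integral>\<^sup>+ x. ennreal (\<rho> x * \<bar>dens x - 1\<bar>) \<partial>M)
           \<le> ennreal (a * (\<integral>x. ln (dens x) \<partial>N) + b * exp L + c + e)"
proof -
  define f where "f x = a * (dens x * ln (dens x) - dens x + 1) + b * exp (\<rho> x) + c * dens x + e" for x
  have f_ge: "\<rho> x * \<bar>dens x - 1\<bar> \<le> f x" for x
    unfolding f_def using pointwise[OF \<rho>_nonneg dens_nonneg] .
  have f_nonneg: "0 \<le> f x" for x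
    using f_ge[of x] \<rho>_nonneg[of x] by (meson abs_ge_zero mult_nonneg_nonneg order_trans)
  have int_exp: "integrable M (\<lambda>x. exp (\<rho> x))"
    using exp_moment by (intro integrableI_nonneg) (auto simp: top.not_eq_extremum order_le_less_trans)
  have "ennreal (\<integral>x. exp (\<rho> x) \<partial>M) \<le> ennreal (exp L)"
    using exp_moment nn_integral_eq_integral[OF int_exp] by simp
  then have int_exp_le: "(\<integral>x. exp (\<rho> x) \<partial>M) \<le> exp L"
    by (simp add: ennreal_le_iff)
  have int_f: "integrable M f"
    unfolding f_def using integrable_entropy[OF KL] int_exp integrable_dens by auto
  have "(\<integral>\<^sup>+ x. ennreal (\<rho> x * \<bar>dens x - 1\<bar>) \<partial>M) \<le> (\<integral>\<^sup>+ x. ennreal (f x) \<partial>M)"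
    using f_ge by (intro nn_integral_mono ennreal_leI)
  also have "\<dots> = ennreal (\<integral>x. f x \<partial>M)"
    using int_f f_nonneg by (intro nn_integral_eq_integral) auto
  also have "(\<integral>x. f x \<partial>M) = a * (\<integral>x. ln (dens x) \<partial>N) + b * (\<integral>x. exp (\<rho> x) \<partial>M) + c + e"
    unfolding f_def using integrable_entropy[OF KL] int_exp integrable_dens
    by (simp add: integral_entropy[OF KL] integral_dens M.prob_space)
  also have "ennreal \<dots> \<le> ennreal (a * (\<integral>x. ln (dens x) \<partial>N) + b * exp L + c + e)"
    using mult_left_mono[OF int_exp_le \<open>0 \<le> b\<close>] by (intro ennreal_leI) simp
  finally show ?thesis .
qed

lemma nn_integral_weighted_abs_le:
  fixes \<rho> :: "'a \<Rightarrow> real"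
  assumes "\<rho> \<in> borel_measurable M" "\<And>x. 0 \<le> \<rho> x"
    and "(\<integral>\<^sup>+ x. ennreal (exp (\<rho> x)) \<partial>M) \<le> ennreal (exp L)" and "0 < L"
    and KL: "integrable N (\<lambda>x. ln (dens x))" and "(\<integral>x. ln (dens x) \<partial>N) \<le> H" and "0 < H"
  shows "(\<integral>\<^sup>+ x. ennreal (\<rho> x * \<bar>dens x - 1\<bar>) \<partial>M) \<le> ennreal ((3 + 2 * L) * (H + sqrt (H / 2)))"
proof -
  obtain a b c e where "0 \<le> a" "0 \<le> b"
    and pointwise: "\<And>r y. 0 \<le> r \<Longrightarrow> 0 \<le> y \<Longrightarrow>
          r * \<bar>y - 1\<bar> \<le> a * (y * ln y - y + 1) + b * exp r + c * y + e"
    and bound: "a * H + b * exp L + c + e \<le> (3 + 2 * L) * (H + sqrt (H / 2))"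
    using entropy_exp_dual_bound[OF \<open>0 < L\<close> \<open>0 < H\<close>] by blast
  have "(\<integral>\<^sup>+ x. ennreal (\<rho> x * \<bar>dens x - 1\<bar>) \<partial>M)
      \<le> ennreal (a * (\<integral>x. ln (dens x) \<partial>N) + b * exp L + c + e)"
    using nn_integral_weighted_abs_le_linear_bound[OF assms(1-3) KL \<open>0 \<le> b\<close> pointwise] .
  also have "\<dots> \<le> ennreal ((3 + 2 * L) * (H + sqrt (H / 2)))"
    using bound mult_left_mono[OF \<open>(\<integral>x. ln (dens x) \<partial>N) \<le> H\<close> \<open>0 \<le> a\<close>]
    by (intro ennreal_leI) linarith
  finally show ?thesis .
qed

end

section \<open>The maximal coupling\<close>

locale borel_abs_continuous_probs = abs_continuous_probs M N
  for M N :: "(real^'n) measure" +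
  assumes sets_M [measurable_cong]: "sets M = sets borel"
begin

lemma sets_N_borel [measurable_cong]: "sets N = sets borel"
  using sets_N sets_M by simp

lemma borel_measurable_dens_borel [measurable]: "dens \<in> borel_measurable borel"
  using borel_measurable_dens measurable_cong_sets[OF sets_M refl] by blast

definition overlap :: "real^'n \<Rightarrow> real" where
  "overlap x = min (dens x) 1"

definition deficit :: "real^'n \<Rightarrow> real" where
  "deficit x = max (1 - dens x) 0"

definition excess :: "real^'n \<Rightarrow> real" where
  "excess x = max (dens x - 1) 0"

definition tv :: ennreal where
  "tv = (\<integral>\<^sup>+ x. ennreal (excess x) \<partial>M)"

text \<open>The maximal coupling of \<open>M\<close> and \<open>N\<close>: it keeps the common mass \<open>overlap\<close> on the diagonal
  and moves the remaining mass \<open>deficit\<close> of \<open>M\<close> independently onto \<open>excess\<close>, both of total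
  mass \<open>tv\<close>. The two parts are glued together as a density on \<open>(M \<Otimes> M) \<Otimes> bool\<close>, the
  Boolean coordinate selecting the diagonal part.\<close>

definition coupling_base :: "(((real^'n) \<times> (real^'n)) \<times> bool) measure" where
  "coupling_base = (M \<Otimes>\<^sub>M M) \<Otimes>\<^sub>M count_space UNIV"

definition coupling_weight :: "((real^'n) \<times> (real^'n)) \<times> bool \<Rightarrow> ennreal" where
  "coupling_weight z = (if snd z then ennreal (overlap (fst (fst z)))
     else ennreal (deficit (fst (fst z))) * ennreal (excess (snd (fst z))) * inverse tv)"

definition coupling_map :: "((real^'n) \<times> (real^'n)) \<times> bool \<Rightarrow> (real^'n) \<times> (real^'n)" where
  "coupling_map z = (if snd z then (fst (fst z), fst (fst z)) else fst z)"

definition max_coupling :: "((real^'n) \<times> (real^'n)) measure" where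
  "max_coupling = distr (density coupling_base coupling_weight) (borel \<Otimes>\<^sub>M borel) coupling_map"

lemma borel_measurable_overlap [measurable]: "overlap \<in> borel_measurable borel"
  unfolding overlap_def by measurable

lemma borel_measurable_deficit [measurable]: "deficit \<in> borel_measurable borel"
  unfolding deficit_def by measurable

lemma borel_measurable_excess [measurable]: "excess \<in> borel_measurable borel"
  unfolding excess_def by measurable

lemma sets_coupling_base [measurable_cong]:
  "sets coupling_base = sets ((borel \<Otimes>\<^sub>M borel) \<Otimes>\<^sub>M (count_space UNIV :: bool measure))"
  unfolding coupling_base_def by (intro sets_pair_measure_cong sets_M refl)

lemma borel_measurable_coupling_weight [measurable]: "coupling_weight \<in> borel_measurable coupling_base"
  unfolding coupling_weight_def by measurable

lemma measurable_coupling_map [measurable]: "coupling_map \<in> coupling_base \<rightarrow>\<^sub>M borel \<Otimes>\<^sub>M borel"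
  unfolding coupling_map_def by measurable

lemma sets_max_coupling: "sets max_coupling = sets (borel \<Otimes>\<^sub>M borel)"
  unfolding max_coupling_def by simp

lemma nn_integral_max_coupling:
  assumes [measurable]: "F \<in> borel_measurable (borel \<Otimes>\<^sub>M borel)"
  shows "(\<integral>\<^sup>+ z. F z \<partial>max_coupling) =
    (\<integral>\<^sup>+ x. ennreal (overlap x) * F (x, x)
       + ennreal (deficit x) * inverse tv * (\<integral>\<^sup>+ y. ennreal (excess y) * F (x, y) \<partial>M) \<partial>M)"
proof -
  interpret bool: sigma_finite_measure "count_space (UNIV :: bool set)"
    by (rule sigma_finite_measure_count_space_finite) simp
  have "(\<integral>\<^sup>+ z. F z \<partial>max_coupling) = (\<integral>\<^sup>+ z. coupling_weight z * F (coupling_map z) \<partial>coupling_base)"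
    unfolding max_coupling_def
    by (subst nn_integral_distr) (auto simp: measurable_cong_sets[OF sets_density refl] nn_integral_density)
  also have "\<dots> = (\<integral>\<^sup>+ p. \<integral>\<^sup>+ \<beta>. coupling_weight (p, \<beta>) * F (coupling_map (p, \<beta>)) \<partial>count_space UNIV \<partial>(M \<Otimes>\<^sub>M M))"
    unfolding coupling_base_def by (rule bool.nn_integral_fst[symmetric]) (simp add: coupling_base_def[symmetric])
  also have "\<dots> = (\<integral>\<^sup>+ p. ennreal (overlap (fst p)) * F (fst p, fst p)
      + ennreal (deficit (fst p)) * inverse tv * (ennreal (excess (snd p)) * F p) \<partial>(M \<Otimes>\<^sub>M M))"
    by (rule nn_integral_cong)
      (simp add: nn_integral_count_space_finite UNIV_bool coupling_weight_def coupling_map_def ac_simps)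
  also have "\<dots> = (\<integral>\<^sup>+ x. \<integral>\<^sup>+ y. ennreal (overlap x) * F (x, x)
      + ennreal (deficit x) * inverse tv * (ennreal (excess y) * F (x, y)) \<partial>M \<partial>M)"
    by (subst M.nn_integral_fst[symmetric]) auto
  also have "\<dots> = (\<integral>\<^sup>+ x. ennreal (overlap x) * F (x, x)
      + ennreal (deficit x) * inverse tv * (\<integral>\<^sup>+ y. ennreal (excess y) * F (x, y) \<partial>M) \<partial>M)"
    by (intro nn_integral_cong)
      (simp add: nn_integral_add nn_integral_cmult M.emeasure_space_1)
  finally show ?thesis .
qed

lemma overlap_plus_excess: "ennreal (overlap x) + ennreal (excess x) = ennreal (dens x)"
proof -
  have "overlap x + excess x = dens x"
    unfolding overlap_def excess_def by auto
  then show ?thesis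
    using dens_nonneg[of x] unfolding overlap_def excess_def by (subst ennreal_plus[symmetric]) auto
qed

lemma overlap_plus_deficit: "ennreal (overlap x) + ennreal (deficit x) = 1"
proof -
  have "overlap x + deficit x = 1"
    unfolding overlap_def deficit_def by auto
  then show ?thesis
    using dens_nonneg[of x] unfolding overlap_def deficit_def by (subst ennreal_plus[symmetric]) auto
qed

lemma deficit_plus_excess: "ennreal (deficit x) + ennreal (excess x) = ennreal \<bar>dens x - 1\<bar>"
proof -
  have "deficit x + excess x = \<bar>dens x - 1\<bar>"
    unfolding deficit_def excess_def by auto
  then show ?thesis
    unfolding deficit_def excess_def by (subst ennreal_plus[symmetric]) auto
qed

lemma nn_integral_deficit: "(\<integral>\<^sup>+ x. ennreal (deficit x) \<partial>M) = tv"
  and tv_finite: "tv < \<infinity>"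
proof -
  have "(\<integral>\<^sup>+ x. ennreal (overlap x) \<partial>M) + tv = 1"
    using nn_integral_dens unfolding tv_def
    by (subst nn_integral_add[symmetric]) (auto simp: overlap_plus_excess)
  moreover have "(\<integral>\<^sup>+ x. ennreal (overlap x) \<partial>M) + (\<integral>\<^sup>+ x. ennreal (deficit x) \<partial>M) = 1"
    by (subst nn_integral_add[symmetric]) (auto simp: overlap_plus_deficit M.emeasure_space_1)
  ultimately show "(\<integral>\<^sup>+ x. ennreal (deficit x) \<partial>M) = tv" and "tv < \<infinity>"
    by (metis ennreal_add_left_cancel ennreal_add_eq_top ennreal_one_neq_top top.not_eq_extremum)+
qed

lemma inverse_tv_times_tv: "inverse tv * tv = (if tv = 0 then 0 else 1)"
  using tv_finite ennreal_divide_self[of tv] by (auto simp: divide_ennreal_def mult.commute)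

lemma inverse_tv_cancel: "X \<le> tv \<Longrightarrow> inverse tv * tv * X = X"
  by (auto simp: inverse_tv_times_tv)

lemma distr_max_coupling_fst: "distr max_coupling borel fst = M"
proof (rule measure_eqI)
  fix A assume "A \<in> sets (distr max_coupling borel fst)"
  then have A [measurable]: "A \<in> sets borel"
    by simp
  have "emeasure (distr max_coupling borel fst) A = (\<integral>\<^sup>+ z. indicator A (fst z) \<partial>max_coupling)"
    by (subst nn_integral_indicator[symmetric], simp, subst nn_integral_distr)
      (auto simp: measurable_cong_sets[OF sets_max_coupling refl])
  also have "\<dots> = (\<integral>\<^sup>+ x. ennreal (overlap x) * indicator A x
      + inverse tv * tv * (ennreal (deficit x) * indicator A x) \<partial>M)"
  proof -
    have "(\<integral>\<^sup>+ y. ennreal (excess y) * indicator A x \<partial>M) = tv * indicator A x" for x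
      unfolding tv_def by (rule nn_integral_multc) measurable
    then show ?thesis
      by (subst nn_integral_max_coupling) (auto intro!: nn_integral_cong simp: ac_simps)
  qed
  also have "\<dots> = (\<integral>\<^sup>+ x. ennreal (overlap x) * indicator A x \<partial>M)
      + inverse tv * tv * (\<integral>\<^sup>+ x. ennreal (deficit x) * indicator A x \<partial>M)"
    by (auto simp: nn_integral_add nn_integral_cmult)
  also have "\<dots> = (\<integral>\<^sup>+ x. (ennreal (overlap x) + ennreal (deficit x)) * indicator A x \<partial>M)"
    by (subst inverse_tv_cancel)
      (auto simp: nn_integral_add distrib_right nn_integral_deficit[symmetric]
        intro!: nn_integral_mono split: split_indicator)
  also have "\<dots> = emeasure M A"
    using sets_M by (simp add: overlap_plus_deficit)
  finally show "emeasure (distr max_coupling borel fst) A = emeasure M A" .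
qed (simp add: sets_M)

lemma distr_max_coupling_snd: "distr max_coupling borel snd = N"
proof (rule measure_eqI)
  fix A assume "A \<in> sets (distr max_coupling borel snd)"
  then have A [measurable]: "A \<in> sets borel"
    by simp
  define C where "C = (\<integral>\<^sup>+ y. ennreal (excess y) * indicator A y \<partial>M)"
  have "C \<le> tv"
    unfolding C_def tv_def by (intro nn_integral_mono) (simp split: split_indicator)
  have "emeasure (distr max_coupling borel snd) A = (\<integral>\<^sup>+ z. indicator A (snd z) \<partial>max_coupling)"
    by (subst nn_integral_indicator[symmetric], simp, subst nn_integral_distr)
      (auto simp: measurable_cong_sets[OF sets_max_coupling refl])
  also have "\<dots> = (\<integral>\<^sup>+ x. ennreal (overlap x) * indicator A x + (inverse tv * C) * ennreal (deficit x) \<partial>M)"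
    by (subst nn_integral_max_coupling) (auto intro!: nn_integral_cong simp: C_def ac_simps)
  also have "\<dots> = (\<integral>\<^sup>+ x. ennreal (overlap x) * indicator A x \<partial>M) + inverse tv * tv * C"
    by (simp add: nn_integral_add nn_integral_cmult nn_integral_deficit ac_simps)
  also have "\<dots> = (\<integral>\<^sup>+ x. (ennreal (overlap x) + ennreal (excess x)) * indicator A x \<partial>M)"
    using \<open>C \<le> tv\<close> by (simp add: inverse_tv_cancel C_def nn_integral_add distrib_right)
  also have "\<dots> = emeasure N A"
  proof -
    have "emeasure N A = emeasure (density M (\<lambda>x. ennreal (dens x))) A"
      by (simp only: density_dens)
    then show ?thesis
      using A sets_M by (simp add: overlap_plus_excess emeasure_density)
  qed
  finally show "emeasure (distr max_coupling borel snd) A = emeasure N A" .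
qed (simp add: sets_N_borel)

lemma max_coupling_in_couplings: "max_coupling \<in> couplings M N"
proof -
  have "emeasure max_coupling (space max_coupling) = emeasure (distr max_coupling borel fst) UNIV"
    by (subst emeasure_distr) (auto simp: measurable_cong_sets[OF sets_max_coupling refl]
        sets_eq_imp_space_eq[OF sets_max_coupling] space_pair_measure)
  then have "prob_space max_coupling"
    using M.emeasure_space_1 sets_eq_imp_space_eq[OF sets_M]
    by (intro prob_spaceI) (simp add: distr_max_coupling_fst)
  then show ?thesis
    unfolding couplings_def
    using sets_max_coupling distr_max_coupling_fst distr_max_coupling_snd by simp
qed

lemma nn_integral_max_coupling_cost_le:
  fixes c :: "real^'n \<Rightarrow> real^'n \<Rightarrow> real" and \<rho> :: "real^'n \<Rightarrow> real"
  assumes [measurable]: "(\<lambda>z. c (fst z) (snd z)) \<in> borel_measurable (borel \<Otimes>\<^sub>M borel)"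
    and c_diag: "\<And>x. c x x = 0" and c_le: "\<And>x y. c x y \<le> K * (\<rho> x + \<rho> y)" and "0 \<le> K"
    and [measurable]: "\<rho> \<in> borel_measurable borel" and \<rho>_nonneg: "\<And>x. 0 \<le> \<rho> x"
  shows "(\<integral>\<^sup>+ z. ennreal (c (fst z) (snd z)) \<partial>max_coupling)
           \<le> ennreal K * (\<integral>\<^sup>+ x. ennreal (\<rho> x * \<bar>dens x - 1\<bar>) \<partial>M)"
proof -
  define D where "D = (\<integral>\<^sup>+ x. ennreal (deficit x) * ennreal (\<rho> x) \<partial>M)"
  define E where "E = (\<integral>\<^sup>+ y. ennreal (excess y) * ennreal (\<rho> y) \<partial>M)"
  have inner: "(\<integral>\<^sup>+ y. ennreal (excess y) * ennreal (c x y) \<partial>M) \<le> ennreal K * (ennreal (\<rho> x) * tv + E)" for x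
  proof -
    have "ennreal (excess y) * ennreal (c x y)
        \<le> ennreal K * (ennreal (\<rho> x) * ennreal (excess y) + ennreal (excess y) * ennreal (\<rho> y))" for y
    proof -
      have "0 \<le> excess y"
        by (simp add: excess_def)
      then have "excess y * c x y \<le> K * (\<rho> x * excess y + excess y * \<rho> y)"
        using mult_left_mono[OF c_le[of x y] \<open>0 \<le> excess y\<close>] by (simp add: algebra_simps)
      then show ?thesis
        using \<open>0 \<le> excess y\<close> \<open>0 \<le> K\<close> \<rho>_nonneg[of x] \<rho>_nonneg[of y]
        by (simp add: ennreal_mult'[symmetric] ennreal_mult[symmetric] ennreal_plus[symmetric] ennreal_leI
            del: ennreal_plus)
    qed
    then have "(\<integral>\<^sup>+ y. ennreal (excess y) * ennreal (c x y) \<partial>M)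
        \<le> (\<integral>\<^sup>+ y. ennreal K * (ennreal (\<rho> x) * ennreal (excess y) + ennreal (excess y) * ennreal (\<rho> y)) \<partial>M)"
      by (intro nn_integral_mono)
    also have "\<dots> = ennreal K * (ennreal (\<rho> x) * tv + E)"
      unfolding tv_def E_def by (simp add: nn_integral_cmult nn_integral_add)
    finally show ?thesis .
  qed
  have "(\<integral>\<^sup>+ z. ennreal (c (fst z) (snd z)) \<partial>max_coupling) = (\<integral>\<^sup>+ x. ennreal (overlap x) * ennreal (c x x)
      + ennreal (deficit x) * inverse tv * (\<integral>\<^sup>+ y. ennreal (excess y) * ennreal (c x y) \<partial>M) \<partial>M)"
    by (simp add: nn_integral_max_coupling)
  also have "\<dots> \<le> (\<integral>\<^sup>+ x. ennreal (deficit x) * inverse tv * (ennreal K * (ennreal (\<rho> x) * tv + E)) \<partial>M)"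
    using inner by (intro nn_integral_mono) (simp add: c_diag mult_left_mono)
  also have "\<dots> = (\<integral>\<^sup>+ x. (ennreal K * (inverse tv * tv)) * (ennreal (deficit x) * ennreal (\<rho> x))
      + (ennreal K * inverse tv * E) * ennreal (deficit x) \<partial>M)"
    by (intro nn_integral_cong) (simp add: algebra_simps)
  also have "\<dots> = (ennreal K * (inverse tv * tv)) * D + (ennreal K * inverse tv * E) * tv"
    unfolding D_def by (simp add: nn_integral_add nn_integral_cmult nn_integral_deficit)
  also have "\<dots> = ennreal K * (inverse tv * tv) * (D + E)"
    by (simp add: algebra_simps)
  also have "\<dots> \<le> ennreal K * (D + E)"
    by (simp add: inverse_tv_times_tv)
  also have "D + E = (\<integral>\<^sup>+ x. ennreal (\<rho> x * \<bar>dens x - 1\<bar>) \<partial>M)"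
  proof -
    have "ennreal (deficit x) * ennreal (\<rho> x) + ennreal (excess x) * ennreal (\<rho> x)
        = ennreal (\<rho> x * \<bar>dens x - 1\<bar>)" for x
      using \<rho>_nonneg[of x]
      by (simp only: distrib_right[symmetric] deficit_plus_excess) (simp add: ennreal_mult mult.commute)
    then show ?thesis
      unfolding D_def E_def by (subst nn_integral_add[symmetric]) auto
  qed
  finally show ?thesis .
qed

end

section \<open>Transport cost\<close>

lemma powr_add_le_two_powr:
  fixes a b p :: real
  assumes "0 \<le> a" "0 \<le> b" "1 \<le> p"
  shows "(a + b) powr p \<le> 2 powr (p - 1) * (a powr p + b powr p)"
proof (cases "a = 0 \<or> b = 0")
  case True
  have "1 \<le> 2 powr (p - 1)"
    using assms by (intro ge_one_powr_ge_zero) auto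
  then show ?thesis
    using True assms by (auto intro: order_trans[OF _ mult_right_mono[of 1]])
next
  case False
  then have "0 < a" "0 < b"
    using assms by auto
  have "((1 - 1/2) *\<^sub>R a + (1/2) *\<^sub>R b) powr p \<le> (1 - 1/2) * a powr p + (1/2) * b powr p"
    using \<open>0 < a\<close> \<open>0 < b\<close> by (intro convex_onD[OF powr_convex[OF \<open>1 \<le> p\<close>]]) auto
  then have "((a + b) / 2) powr p \<le> (a powr p + b powr p) / 2"
    by (simp add: field_simps)
  then have "2 powr p * ((a + b) / 2) powr p \<le> 2 powr p * ((a powr p + b powr p) / 2)"
    by (intro mult_left_mono) auto
  then show ?thesis
    by (simp add: powr_divide powr_diff field_simps)
qed

lemma powr_add_powr_le_powr_add:
  fixes a b p :: real
  assumes "0 \<le> a" "0 \<le> b" "1 \<le> p"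
  shows "a powr p + b powr p \<le> (a + b) powr p"
proof (cases "a + b = 0")
  case False
  then have s: "0 < a + b"
    using assms by simp
  have le: "x powr p \<le> x" if "0 \<le> x" "x \<le> 1" for x :: real
    using powr_mono'[OF \<open>1 \<le> p\<close> that] that by simp
  have "a powr p + b powr p = (a + b) powr p * ((a / (a + b)) powr p + (b / (a + b)) powr p)"
    using s assms by (simp add: powr_divide distrib_left)
  also have "\<dots> \<le> (a + b) powr p * (a / (a + b) + b / (a + b))"
    using assms s by (intro mult_left_mono add_mono le) auto
  also have "\<dots> = (a + b) powr p"
    using s by (simp add: add_divide_distrib[symmetric])
  finally show ?thesis .
qed (use assms in \<open>simp add: add_nonneg_eq_0_iff\<close>)

lemma mnorm_diff_powr_le:
  assumes "pos_def_mat S" "1 \<le> p"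
  shows "mnorm S (x - y) powr p \<le> 2 powr (p - 1) * (mnorm S (x - \<theta>) powr p + mnorm S (y - \<theta>) powr p)"
proof -
  have "mnorm S (x - y) powr p \<le> (mnorm S (x - \<theta>) + mnorm S (y - \<theta>)) powr p"
    using assms mnorm_diff_triangle mnorm_nonneg by (intro powr_mono2) auto
  also have "\<dots> \<le> 2 powr (p - 1) * (mnorm S (x - \<theta>) powr p + mnorm S (y - \<theta>) powr p)"
    using assms mnorm_nonneg by (intro powr_add_le_two_powr) auto
  finally show ?thesis .
qed

lemma exp_controlled_obtain_center:
  fixes \<eta> :: "(real^'n) measure"
  assumes "exp_controlled p S \<eta>" and "real CARD('n) / 2 < L"
  obtains \<theta> where "(\<integral>\<^sup>+ x. ennreal (exp (mnorm S (x - \<theta>) powr p)) \<partial>\<eta>) \<le> ennreal (exp L)"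
proof -
  have "(INF \<theta>. \<integral>\<^sup>+ x. ennreal (exp (mnorm S (x - \<theta>) powr p)) \<partial>\<eta>) < ennreal (exp L)"
    using assms unfolding exp_controlled_def by (auto intro: le_less_trans simp: ennreal_lessI)
  then show ?thesis
    using that by (meson INF_less_iff less_imp_le)
qed

definition optimal_cost :: "real \<Rightarrow> real^'n^'n \<Rightarrow> (real^'n) measure \<Rightarrow> (real^'n) measure \<Rightarrow> ennreal" where
  "optimal_cost p S \<eta> \<zeta> = (INF \<omega>\<in>couplings \<eta> \<zeta>. \<integral>\<^sup>+ z. ennreal (mnorm S (fst z - snd z) powr p) \<partial>\<omega>)"

lemma wasserstein_le:
  assumes "0 < p" "0 \<le> R" and "optimal_cost p S \<eta> \<zeta> \<le> ennreal (R powr p)"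
  shows "wasserstein p S \<eta> \<zeta> \<le> ennreal R"
proof -
  have "optimal_cost p S \<eta> \<zeta> \<noteq> \<infinity>"
    using assms(3) by (auto simp: top_unique)
  moreover have "enn2real (optimal_cost p S \<eta> \<zeta>) powr (1 / p) \<le> (R powr p) powr (1 / p)"
    using assms by (intro powr_mono2 enn2real_leI) auto
  ultimately show ?thesis
    using assms unfolding wasserstein_def optimal_cost_def[symmetric]
    by (auto simp: powr_powr intro!: ennreal_leI)
qed

lemma ennreal_le_of_tendsto_at_right:
  fixes f :: "real \<Rightarrow> real"
  assumes "\<And>u. 0 < u \<Longrightarrow> c \<le> ennreal (f u)" and "(f \<longlongrightarrow> l) (at_right 0)"
  shows "c \<le> ennreal l"
proof (rule tendsto_le[OF trivial_limit_at_right_real])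
  show "((\<lambda>u. ennreal (f u)) \<longlongrightarrow> ennreal l) (at_right 0)"
    using assms(2) by (rule tendsto_ennrealI)
  show "\<forall>\<^sub>F u in at_right 0. c \<le> ennreal (f u)"
    using eventually_at_right_less[of 0] by eventually_elim (use assms(1) in auto)
qed simp

lemma entropy_bound_le_powr:
  fixes p d H :: real
  assumes "1 \<le> p" "0 \<le> d" "0 \<le> H"
  shows "2 powr (p - 1) * ((3 + d) * (H + sqrt (H / 2)))
           \<le> ((3 + d) * (H powr (1 / p) + (H / 2) powr (1 / (2 * p)))) powr p"
proof -
  have "2 powr (p - 1) * (3 + d) \<le> (3 + d) powr (p - 1) * (3 + d)"
    using assms by (intro mult_right_mono powr_mono2) auto
  also have "\<dots> = (3 + d) powr p"
    using assms by (simp add: powr_diff)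
  finally have factor: "2 powr (p - 1) * (3 + d) \<le> (3 + d) powr p" .
  have "H + sqrt (H / 2) = (H powr (1 / p)) powr p + ((H / 2) powr (1 / (2 * p))) powr p"
    using assms by (simp add: powr_powr powr_half_sqrt)
  also have "\<dots> \<le> (H powr (1 / p) + (H / 2) powr (1 / (2 * p))) powr p"
    using assms by (intro powr_add_powr_le_powr_add) auto
  finally have "2 powr (p - 1) * (3 + d) * (H + sqrt (H / 2))
      \<le> (3 + d) powr p * (H powr (1 / p) + (H / 2) powr (1 / (2 * p))) powr p"
    using assms factor by (intro mult_mono) auto
  then show ?thesis
    using assms by (simp add: powr_mult mult.assoc)
qed

context borel_abs_continuous_probs
begin

lemma optimal_cost_le_entropy:
  assumes S: "pos_def_mat S" and p: "1 \<le> p"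
    and moment: "(\<integral>\<^sup>+ x. ennreal (exp (mnorm S (x - \<theta>) powr p)) \<partial>M) \<le> ennreal (exp L)" and "0 < L"
    and KL: "integrable N (\<lambda>x. ln (dens x))" and "(\<integral>x. ln (dens x) \<partial>N) \<le> H" and "0 < H"
  shows "optimal_cost p S M N \<le> ennreal (2 powr (p - 1) * ((3 + 2 * L) * (H + sqrt (H / 2))))"
proof -
  define \<rho> where "\<rho> x = mnorm S (x - \<theta>) powr p" for x
  have [measurable]: "\<rho> \<in> borel_measurable borel"
    unfolding \<rho>_def by measurable
  then have "\<rho> \<in> borel_measurable M"
    using measurable_cong_sets[OF sets_M refl] by blast
  have "optimal_cost p S M N \<le> (\<integral>\<^sup>+ z. ennreal (mnorm S (fst z - snd z) powr p) \<partial>max_coupling)"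
    unfolding optimal_cost_def by (rule INF_lower[OF max_coupling_in_couplings])
  also have "\<dots> \<le> ennreal (2 powr (p - 1)) * (\<integral>\<^sup>+ x. ennreal (\<rho> x * \<bar>dens x - 1\<bar>) \<partial>M)"
    using mnorm_diff_powr_le[OF S p] unfolding \<rho>_def
    by (intro nn_integral_max_coupling_cost_le) auto
  also have "\<dots> \<le> ennreal (2 powr (p - 1)) * ennreal ((3 + 2 * L) * (H + sqrt (H / 2)))"
    using moment assms(4-) \<open>\<rho> \<in> borel_measurable M\<close> unfolding \<rho>_def
    by (intro mult_left_mono nn_integral_weighted_abs_le) auto
  also have "\<dots> = ennreal (2 powr (p - 1) * ((3 + 2 * L) * (H + sqrt (H / 2))))"
    by (rule ennreal_mult'[symmetric]) simp
  finally show ?thesis .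
qed

text \<open>Exponential control only bounds an infimum and the coefficients above need \<open>H > 0\<close>, so the
  bound is first proved with \<open>L = d / 2 + u\<close> and \<open>H + u\<close> in place of \<open>H\<close>, and then \<open>u \<rightarrow> 0\<close>.\<close>
lemma optimal_cost_le_KL:
  assumes S: "pos_def_mat S" and p: "1 \<le> p" and "exp_controlled p S M"
    and KL: "integrable N (\<lambda>x. ln (dens x))"
  defines "H \<equiv> \<integral>x. ln (dens x) \<partial>N"
  shows "optimal_cost p S M N \<le> ennreal (2 powr (p - 1) * ((3 + real CARD('n)) * (H + sqrt (H / 2))))"
proof -
  have "0 \<le> H"
    unfolding H_def by (rule integral_ln_dens_nonneg[OF KL])
  have "optimal_cost p S M N
      \<le> ennreal (2 powr (p - 1) * ((3 + 2 * (real CARD('n) / 2 + u)) * ((H + u) + sqrt ((H + u) / 2))))"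
    if "0 < u" for u
  proof -
    obtain \<theta> where
      "(\<integral>\<^sup>+ x. ennreal (exp (mnorm S (x - \<theta>) powr p)) \<partial>M) \<le> ennreal (exp (real CARD('n) / 2 + u))"
      using exp_controlled_obtain_center[OF \<open>exp_controlled p S M\<close>, of "real CARD('n) / 2 + u"] \<open>0 < u\<close>
      by auto
    then show ?thesis
      using \<open>0 < u\<close> \<open>0 \<le> H\<close> by (intro optimal_cost_le_entropy[OF S p _ _ KL]) (auto simp: H_def)
  qed
  moreover have "((\<lambda>u. 2 powr (p - 1) * ((3 + 2 * (real CARD('n) / 2 + u)) * ((H + u) + sqrt ((H + u) / 2))))
      \<longlongrightarrow> 2 powr (p - 1) * ((3 + real CARD('n)) * (H + sqrt (H / 2)))) (at_right 0)"
    by (auto intro!: tendsto_eq_intros)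
  ultimately show ?thesis
    by (rule ennreal_le_of_tendsto_at_right)
qed

end

theorem mainTheorem1:
  fixes p :: real and \<Sigma> :: "real^'n^'n" and \<eta> \<zeta> :: "(real^'n) measure"
  assumes "p \<ge> 1"
    and "pos_def_mat \<Sigma>"
    and "prob_space \<eta>" and "sets \<eta> = sets borel"
    and "exp_controlled p \<Sigma> \<eta>"
    and "prob_space \<zeta>" and "sets \<zeta> = sets borel"
    and "absolutely_continuous \<eta> \<zeta>"
  shows "KL \<zeta> \<eta> = \<infinity> \<or>
    wasserstein p \<Sigma> \<eta> \<zeta> \<le>
      ennreal ((3 + real CARD('n)) *
        (real_of_ereal (KL \<zeta> \<eta>) powr (1 / p) + (real_of_ereal (KL \<zeta> \<eta>) / 2) powr (1 / (2 * p))))"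
proof -
  interpret borel_abs_continuous_probs \<eta> \<zeta>
    using assms unfolding borel_abs_continuous_probs_def borel_abs_continuous_probs_axioms_def
      abs_continuous_probs_def abs_continuous_probs_axioms_def by simp
  show ?thesis
  proof (cases "integrable \<zeta> (\<lambda>x. ln (dens x))")
    case True
    define H where "H = (\<integral>x. ln (dens x) \<partial>\<zeta>)"
    have "optimal_cost p \<Sigma> \<eta> \<zeta> \<le> ennreal (2 powr (p - 1) * ((3 + real CARD('n)) * (H + sqrt (H / 2))))"
      unfolding H_def using assms True by (intro optimal_cost_le_KL) auto
    also have "\<dots> \<le> ennreal (((3 + real CARD('n)) * (H powr (1 / p) + (H / 2) powr (1 / (2 * p)))) powr p)"
      using assms integral_ln_dens_nonneg[OF True] unfolding H_def
      by (intro ennreal_leI entropy_bound_le_powr) auto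
    finally show ?thesis
      using assms integral_ln_dens_nonneg[OF True] unfolding H_def
      by (auto simp: KL_eq True intro!: wasserstein_le)
  next
    case False
    then have "KL \<zeta> \<eta> = \<infinity>"
      by (simp add: KL_eq)
    then show ?thesis ..
  qed
qed

end
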